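(* Let $\mathcal{X}$ be a nonempty closed domain set whose closed convex hull $\operatorname{clconv}(\mathcal{X})$ contains no line, and let $0\le\tilde m\le m$ be integers. Suppose that for every face $F$ of $\operatorname{clconv}(\mathcal{X})$ of dimension at most $\tilde m$ and every face $\widehat F$ of the recession cone $\operatorname{rec}(\operatorname{clconv}(\mathcal{X}))$ of dimension at most $\tilde m+1$, the Minkowski sum satisfies $F+\widehat F\subseteq\mathcal{X}$. Then for every choice of $m$ LMIs of dimension $\tilde m$, $\mathcal{C}_{\mathrm{rel}}=\operatorname{clconv}(\mathcal{C})$.
   Context: Let $\mathcal{Q}$ be one of $\mathbb{S}^n_+$, $\mathbb{S}^n$ or $\mathbb{R}^{n\times p}$, where $k\le n\le p$ are positive integers, with trace inner product $\langle A,X\rangle=\operatorname{tr}(A^\top X)$. A domain set is a set $\mathcal{X}=\{X\in\mathcal{Q}:\operatorname{rank}(X)\le k,\ F_j(X)\le0\ \forall j\in[t]\}$ with each $F_j:\mathcal{Q}\to\mathbb{R}$ continuous. $\operatorname{clconv}$ is closed convex hull. A system of $m$ LMIs consists of matrices $A_1,\dots,A_m$ (same size as elements of $\mathcal{Q}$, possibly non-symmetric) and bounds $-\infty\le b_i^l\le b_i^u\le+\infty$; its dimension is $\dim\operatorname{span}\{A_1,\dots,A_m\}$. Set $\mathcal{C}=\{X\in\mathcal{X}: b_i^l\le\langle A_i,X\rangle\le b_i^u\ \forall i\}$ and $\mathcal{C}_{\mathrm{rel}}=\{X\in\operatorname{clconv}(\mathcal{X}): b_i^l\le\langle A_i,X\rangle\le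 b_i^u\ \forall i\}$. A face of a closed convex set $D$ is a convex $F\subseteq D$ such that any segment $[a,b]\subseteq D$ whose open part meets $F$ lies in $F$; its dimension is that of its affine hull. The recession cone of a closed convex set $D$ is $\operatorname{rec}(D)=\{d: x+td\in D\ \forall x\in D,\ t\ge0\}$. *)

theory Defs
  imports "HOL-Analysis.Analysis" "HOL-Library.Extended_Real"
begin

text \<open>Matrices in R^{n x p} are represented as real^'p^'n (n rows indexed by 'n,
  p columns indexed by 'p). Trace inner product <A,X> = tr(A^T X).\<close>

definition frob :: "real^'p^'n \<Rightarrow> real^'p^'n \<Rightarrow> real" where
  "frob A X = trace (transpose A ** X)"

definition sym_mats :: "(real^'n^'n) set" where
  "sym_mats = {X. transpose X = X}"

definition psd_mats :: "(real^'n^'n) set" where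
  "psd_mats = {X. transpose X = X \<and> (\<forall>v. 0 \<le> v \<bullet> (X *v v))}"

definition domain_set ::
  "(real^'p^'n) set \<Rightarrow> nat \<Rightarrow> nat \<Rightarrow> (nat \<Rightarrow> real^'p^'n \<Rightarrow> real) \<Rightarrow> (real^'p^'n) set" where
  "domain_set Q k t F = {X \<in> Q. rank X \<le> k \<and> (\<forall>j<t. F j X \<le> 0)}"

definition clconv :: "'a::real_normed_vector set \<Rightarrow> 'a set" where
  "clconv S = closure (convex hull S)"

definition rec_cone :: "'a::real_vector set \<Rightarrow> 'a set" where
  "rec_cone D = {d. \<forall>x\<in>D. \<forall>t::real. t \<ge> 0 \<longrightarrow> x + t *\<^sub>R d \<in> D}"

definition contains_line :: "'a::real_vector set \<Rightarrow> bool" where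
  "contains_line D \<longleftrightarrow> (\<exists>x d. d \<noteq> 0 \<and> (\<forall>t::real. x + t *\<^sub>R d \<in> D))"

definition minkowski_sum :: "'a::real_vector set \<Rightarrow> 'a set \<Rightarrow> 'a set" where
  "minkowski_sum F G = {x + y | x y. x \<in> F \<and> y \<in> G}"

definition lmi_cut ::
  "(real^'p^'n) set \<Rightarrow> nat \<Rightarrow> (nat \<Rightarrow> real^'p^'n) \<Rightarrow> (nat \<Rightarrow> ereal) \<Rightarrow> (nat \<Rightarrow> ereal) \<Rightarrow> (real^'p^'n) set" where
  "lmi_cut S m A bl bu = {X \<in> S. \<forall>i<m. bl i \<le> ereal (frob (A i) X) \<and> ereal (frob (A i) X) \<le> bu i}"

definition theorem3_prop :: "(real^'p^'n) set \<Rightarrow> nat \<Rightarrow> nat \<Rightarrow> nat \<Rightarrow> bool" where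
  "theorem3_prop Q k mt m \<longleftrightarrow>
    (\<forall>(t::nat) (F :: nat \<Rightarrow> real^'p^'n \<Rightarrow> real).
      (\<forall>j<t. continuous_on Q (F j)) \<longrightarrow>
      domain_set Q k t F \<noteq> {} \<longrightarrow>
      closed (domain_set Q k t F) \<longrightarrow>
      \<not> contains_line (clconv (domain_set Q k t F)) \<longrightarrow>
      (\<forall>Fc Fr. Fc face_of clconv (domain_set Q k t F) \<and> aff_dim Fc \<le> int mt \<and>
               Fr face_of rec_cone (clconv (domain_set Q k t F)) \<and> aff_dim Fr \<le> int mt + 1
               \<longrightarrow> minkowski_sum Fc Fr \<subseteq> domain_set Q k t F) \<longrightarrow>
      (\<forall>(A :: nat \<Rightarrow> real^'p^'n) (bl :: nat \<Rightarrow> ereal) (bu :: nat \<Rightarrow> ereal).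
         (\<forall>i<m. bl i \<le> bu i) \<longrightarrow>
         dim (span (A ` {..<m})) = mt \<longrightarrow>
         lmi_cut (clconv (domain_set Q k t F)) m A bl bu
           = clconv (lmi_cut (domain_set Q k t F) m A bl bu)))"

end

(*
  Let K = clconv X and let P be the set cut out by the LMIs; P is invariant under translations
  orthogonal to the matrices A_i, which span a space of dimension mt.  By induction on the
  dimension of a face G of K we show that G \<inter> P lies in the convex hull of X \<inter> P.
  Faces of dimension at most mt lie in X (take the face {0} of the pointed cone rec K), and a
  relative boundary point of G lies in a face of lower dimension.  For a relative interior
  point x of G with dim G > mt, take a direction e of G orthogonal to all A_i.  If neither e
  nor -e is a recession direction of G, the line through x along e leaves G on both sides at
  relative boundary points that stay in P, and x lies between them.  Otherwise, if
  dim G = mt + 1, then x = y + t e with y in a proper face of G and e in rec G, a face of rec K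
  of dimension at most mt + 1, so x is in X by hypothesis.  If dim G \<ge> mt + 2, the admissible
  directions form a subspace of dimension at least 2, and as rec G is closed and pointed, the
  connectedness of that subspace minus the origin yields an e with neither e nor -e in rec G.
*)

theory Submission
  imports Defs
begin

lemma rec_cone_scaleR:
  fixes D :: "'a::real_vector set"
  assumes "d \<in> rec_cone D" "0 \<le> c"
  shows "c *\<^sub>R d \<in> rec_cone D"
  using assms by (auto simp: rec_cone_def)

lemma closed_rec_cone:
  fixes D :: "'a::real_normed_vector set"
  assumes "closed D"
  shows "closed (rec_cone D)"
proof -
  have "rec_cone D = (\<Inter>x\<in>D. \<Inter>t\<in>{0..}. (\<lambda>d. x + t *\<^sub>R d) -` D)"
    by (auto simp: rec_cone_def)
  moreover have "closed ((\<lambda>d. x + t *\<^sub>R d) -` D)" for x and t :: real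
    using assms by (intro continuous_closed_vimage continuous_intros)
  ultimately show ?thesis
    by (simp add: closed_INT)
qed

lemma convex_rec_cone:
  fixes D :: "'a::real_vector set"
  assumes "convex D"
  shows "convex (rec_cone D)"
proof (rule convexI)
  fix a b and u v :: real
  assume a: "a \<in> rec_cone D" and b: "b \<in> rec_cone D" and uv: "0 \<le> u" "0 \<le> v" "u + v = 1"
  show "u *\<^sub>R a + v *\<^sub>R b \<in> rec_cone D"
    unfolding rec_cone_def
  proof (intro CollectI ballI allI impI)
    fix y and t :: real
    assume "y \<in> D" "0 \<le> t"
    then have "u *\<^sub>R (y + t *\<^sub>R a) + v *\<^sub>R (y + t *\<^sub>R b) \<in> D"
      using a b uv by (intro convexD[OF assms]) (auto simp: rec_cone_def)
    also have "u *\<^sub>R (y + t *\<^sub>R a) + v *\<^sub>R (y + t *\<^sub>R b) = y + t *\<^sub>R (u *\<^sub>R a + v *\<^sub>R b)"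
      using uv by (simp add: algebra_simps flip: scaleR_add_left)
    finally show "y + t *\<^sub>R (u *\<^sub>R a + v *\<^sub>R b) \<in> D" .
  qed
qed

lemma rec_cone_iff_ray:
  fixes D :: "'a::real_normed_vector set"
  assumes D: "closed D" "convex D" and x: "x \<in> D"
  shows "d \<in> rec_cone D \<longleftrightarrow> (\<forall>t\<ge>0. x + t *\<^sub>R d \<in> D)"
proof
  show "d \<in> rec_cone D \<Longrightarrow> \<forall>t\<ge>0. x + t *\<^sub>R d \<in> D"
    using x by (auto simp: rec_cone_def)
next
  assume ray: "\<forall>t\<ge>0. x + t *\<^sub>R d \<in> D"
  show "d \<in> rec_cone D"
    unfolding rec_cone_def
  proof (intro CollectI ballI allI impI)
    fix y and t :: real
    assume y: "y \<in> D" and t: "0 \<le> t"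
    \<comment> \<open>\<open>y + t d\<close> is the limit of the convex combinations
      \<open>(n y + (x + (n + 1) t d)) / (n + 1)\<close> of points of \<open>D\<close>.\<close>
    define f where "f n = y + t *\<^sub>R d + inverse (real (Suc n)) *\<^sub>R (x - y)" for n
    have "f n \<in> D" for n
    proof -
      let ?l = "inverse (real (Suc n))"
      have l: "0 < ?l" "?l \<le> 1"
        by (auto simp: field_simps)
      have "(1 - ?l) *\<^sub>R y + ?l *\<^sub>R (x + (t / ?l) *\<^sub>R d) \<in> D"
        using convexD[OF D(2) y] ray t l by simp
      also have "(1 - ?l) *\<^sub>R y + ?l *\<^sub>R (x + (t / ?l) *\<^sub>R d) = f n"
        using l by (simp add: f_def algebra_simps)
      finally show ?thesis .
    qed
    moreover have "f \<longlonglongrightarrow> y + t *\<^sub>R d + 0 *\<^sub>R (x - y)"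
      unfolding f_def by (intro tendsto_intros LIMSEQ_inverse_real_of_nat)
    ultimately show "y + t *\<^sub>R d \<in> D"
      using closed_sequentially[OF D(1), of f] by simp
  qed
qed

lemma rec_cone_pointed:
  fixes D :: "'a::real_vector set"
  assumes "\<not> contains_line D" "D \<noteq> {}" "d \<in> rec_cone D" "- d \<in> rec_cone D"
  shows "d = 0"
proof (rule ccontr)
  assume "d \<noteq> 0"
  obtain x where x: "x \<in> D"
    using assms(2) by blast
  have "x + t *\<^sub>R d \<in> D" for t :: real
  proof (cases "0 \<le> t")
    case True
    then show ?thesis
      using assms(3) x by (auto simp: rec_cone_def)
  next
    case False
    then have "0 \<le> - t"
      by simp
    then have "x + (- t) *\<^sub>R (- d) \<in> D"
      using assms(4) x unfolding rec_cone_def by blast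
    then show ?thesis
      by simp
  qed
  with assms(1) \<open>d \<noteq> 0\<close> show False
    by (auto simp: contains_line_def)
qed

lemma zero_face_of_rec_cone:
  fixes D :: "'a::real_vector set"
  assumes "\<not> contains_line D" "D \<noteq> {}"
  shows "{0} face_of rec_cone D"
  unfolding face_of_singleton extreme_point_of_def
proof (intro conjI ballI)
  show "0 \<in> rec_cone D"
    by (simp add: rec_cone_def)
  fix a b
  assume a: "a \<in> rec_cone D" and b: "b \<in> rec_cone D"
  show "0 \<notin> open_segment a b"
  proof
    assume "0 \<in> open_segment a b"
    then obtain u where "a \<noteq> b" "0 < u" "u < 1" and comb: "(1 - u) *\<^sub>R a + u *\<^sub>R b = 0"
      by (auto simp: in_segment)
    then have ub: "u *\<^sub>R b = - ((1 - u) *\<^sub>R a)"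
      by (simp add: eq_neg_iff_add_eq_0 add.commute)
    have "b = inverse u *\<^sub>R (u *\<^sub>R b)"
      using \<open>0 < u\<close> by simp
    also have "\<dots> = - ((inverse u * (1 - u)) *\<^sub>R a)"
      unfolding ub by simp
    finally have "- b = (inverse u * (1 - u)) *\<^sub>R a"
      by simp
    then have "b = 0"
      using rec_cone_pointed[OF assms b] rec_cone_scaleR[OF a] \<open>0 < u\<close> \<open>u < 1\<close> by simp
    with comb \<open>u < 1\<close> \<open>a \<noteq> b\<close> show False
      by simp
  qed
qed

lemma rec_cone_face_of_rec_cone:
  fixes K G :: "'a::euclidean_space set"
  assumes K: "closed K" "convex K" and face: "G face_of K" and "G \<noteq> {}"
  shows "rec_cone G face_of rec_cone K"
proof -
  have G: "closed G" "convex G" "G \<subseteq> K"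
    using face_of_imp_closed face_of_imp_convex face_of_imp_subset K face by blast+
  obtain g where g: "g \<in> G"
    using \<open>G \<noteq> {}\<close> by blast
  then have "g \<in> K"
    using G(3) by blast
  show ?thesis
    unfolding face_of_def
  proof (intro conjI ballI impI)
    show "rec_cone G \<subseteq> rec_cone K"
    proof
      fix d
      assume "d \<in> rec_cone G"
      then have "\<forall>t\<ge>0. g + t *\<^sub>R d \<in> G"
        by (simp add: rec_cone_iff_ray[OF G(1,2) g])
      then show "d \<in> rec_cone K"
        using G(3) by (auto simp: rec_cone_iff_ray[OF K \<open>g \<in> K\<close>])
    qed
    show "convex (rec_cone G)"
      using G(2) by (rule convex_rec_cone)
    fix a b w
    assume a: "a \<in> rec_cone K" and b: "b \<in> rec_cone K" and w: "w \<in> rec_cone G"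
      and "w \<in> open_segment a b"
    then obtain u where "a \<noteq> b" "0 < u" "u < 1" and w_eq: "w = (1 - u) *\<^sub>R a + u *\<^sub>R b"
      by (auto simp: in_segment)
    have "g + t *\<^sub>R a \<in> G \<and> g + t *\<^sub>R b \<in> G" if "0 \<le> t" for t
    proof (cases "t = 0")
      case False
      have "g + t *\<^sub>R w = (1 - u) *\<^sub>R (g + t *\<^sub>R a) + u *\<^sub>R (g + t *\<^sub>R b)"
        by (simp add: w_eq algebra_simps flip: scaleR_add_left)
      then have "g + t *\<^sub>R w \<in> open_segment (g + t *\<^sub>R a) (g + t *\<^sub>R b)"
        using \<open>a \<noteq> b\<close> \<open>0 < u\<close> \<open>u < 1\<close> False by (auto simp: in_segment)
      moreover have "g + t *\<^sub>R a \<in> K" "g + t *\<^sub>R b \<in> K" "g + t *\<^sub>R w \<in> G"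
        using a b w g G(3) that by (auto simp: rec_cone_def)
      ultimately show ?thesis
        using face unfolding face_of_def by blast
    qed (use g in simp)
    then show "a \<in> rec_cone G" "b \<in> rec_cone G"
      by (auto simp: rec_cone_iff_ray[OF G(1,2) g])
  qed
qed

lemma aff_dim_rec_cone_le:
  fixes G :: "'a::euclidean_space set"
  assumes "g \<in> G"
  shows "aff_dim (rec_cone G) \<le> aff_dim G"
proof -
  have "rec_cone G \<subseteq> (+) (- g) ` G"
  proof
    fix d
    assume "d \<in> rec_cone G"
    then have "g + 1 *\<^sub>R d \<in> G"
      using assms zero_le_one unfolding rec_cone_def by blast
    then show "d \<in> (+) (- g) ` G"
      by (rule rev_image_eqI) simp
  qed
  then have "aff_dim (rec_cone G) \<le> aff_dim ((+) (- g) ` G)"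
    by (rule aff_dim_subset)
  also have "\<dots> = aff_dim G"
    by (rule aff_dim_translation_eq)
  finally show ?thesis .
qed

lemma rel_frontier_point_in_lower_face:
  fixes G :: "'a::euclidean_space set"
  assumes "closed G" "convex G" "y \<in> G" "y \<notin> rel_interior G"
  obtains G' where "G' face_of G" "y \<in> G'" "aff_dim G' < aff_dim G"
proof -
  obtain a where a: "\<And>z. z \<in> closure G \<Longrightarrow> a \<bullet> y \<le> a \<bullet> z"
    "\<And>z. z \<in> rel_interior G \<Longrightarrow> a \<bullet> y < a \<bullet> z"
    using supporting_hyperplane_relative_frontier[OF assms(2) _ assms(4)] assms(3) closure_subset
    by (metis subsetD)
  let ?G' = "G \<inter> {z. a \<bullet> z = a \<bullet> y}"
  have face: "?G' face_of G"
    by (rule face_of_Int_supporting_hyperplane_ge) (use assms a closure_subset in auto)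
  obtain r where r: "r \<in> rel_interior G"
    using assms rel_interior_eq_empty by blast
  then have "r \<in> G - ?G'"
    using a(2) rel_interior_subset by fastforce
  then have "aff_dim ?G' < aff_dim G"
    using face_of_aff_dim_lt[OF assms(2) face] by blast
  then show ?thesis
    using that face assms(3) by blast
qed

lemma rel_interior_step_along:
  fixes G :: "'a::euclidean_space set"
  assumes y: "y \<in> rel_interior G" and d: "y + d \<in> affine hull G"
  obtains s where "0 < s" "y + s *\<^sub>R d \<in> G"
proof (cases "d = 0")
  case True
  then show ?thesis
    using that[of 1] y rel_interior_subset by auto
next
  case False
  obtain e where e: "0 < e" "ball y e \<inter> affine hull G \<subseteq> G"
    using y mem_rel_interior_ball by blast
  define s where "s = e / (2 * norm d)"
  have "0 < s"
    using e(1) False by (simp add: s_def)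
  have "norm (s *\<^sub>R d) = e / 2"
    using e(1) False by (simp add: s_def)
  then have "y + s *\<^sub>R d \<in> ball y e"
    using e(1) by (simp add: dist_norm)
  moreover have "y \<in> affine hull G"
    by (rule hull_inc[OF subsetD[OF rel_interior_subset y]])
  then have "(1 - s) *\<^sub>R y + s *\<^sub>R (y + d) \<in> affine hull G"
    using d by (intro mem_affine affine_affine_hull) auto
  then have "y + s *\<^sub>R d \<in> affine hull G"
    by (simp add: algebra_simps)
  ultimately show ?thesis
    using that \<open>0 < s\<close> e(2) by blast
qed

lemma ray_leaves_rel_interior:
  fixes G :: "'a::euclidean_space set"
  assumes G: "closed G" "convex G" and x: "x \<in> rel_interior G"
    and d: "d \<in> span ((+) (- x) ` G)" and "d \<notin> rec_cone G"
  obtains t where "0 < t" "x + t *\<^sub>R d \<in> G" "x + t *\<^sub>R d \<notin> rel_interior G"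
proof -
  have xG: "x \<in> G"
    using x rel_interior_subset by blast
  obtain T where T: "0 \<le> T" "x + T *\<^sub>R d \<notin> G"
    using \<open>d \<notin> rec_cone G\<close> rec_cone_iff_ray[OF G xG] by blast
  define I where "I = {t. 0 \<le> t \<and> x + t *\<^sub>R d \<in> G}"
  have I_le_T: "t \<le> T" if "t \<in> I" for t
  proof (rule ccontr)
    assume "\<not> t \<le> T"
    then have "x + T *\<^sub>R d \<in> closed_segment x (x + t *\<^sub>R d)"
      using T by (auto simp: in_segment algebra_simps intro!: exI[of _ "T / t"])
    then show False
      using closed_segment_subset[OF xG _ G(2)] that T(2) I_def by blast
  qed
  have "I = {0..} \<inter> (\<lambda>t. x + t *\<^sub>R d) -` G"
    by (auto simp: I_def)
  moreover have "closed ((\<lambda>t. x + t *\<^sub>R d) -` G)"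
    using G(1) by (intro continuous_closed_vimage continuous_intros)
  ultimately have "closed I"
    by (simp add: closed_Int)
  moreover have "0 \<in> I"
    using xG I_def by simp
  moreover have bdd: "bdd_above I"
    using I_le_T by (rule bdd_aboveI)
  ultimately have "Sup I \<in> I"
    using closed_contains_Sup by blast
  then have sup: "0 \<le> Sup I" "x + Sup I *\<^sub>R d \<in> G"
    by (auto simp: I_def)
  have "x + Sup I *\<^sub>R d \<notin> rel_interior G"
  proof
    assume ri: "x + Sup I *\<^sub>R d \<in> rel_interior G"
    have "x + (Sup I + 1) *\<^sub>R d \<in> affine hull G"
      unfolding affine_hull_span_gen[OF hull_inc[OF xG]] using d by (intro imageI span_scale)
    then have "(x + Sup I *\<^sub>R d) + d \<in> affine hull G"
      by (simp add: algebra_simps)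
    then obtain s where s: "0 < s" "(x + Sup I *\<^sub>R d) + s *\<^sub>R d \<in> G"
      using rel_interior_step_along[OF ri] by blast
    then have "Sup I + s \<in> I"
      using sup(1) by (simp add: I_def algebra_simps)
    then have "Sup I + s \<le> Sup I"
      using bdd by (rule cSup_upper)
    with \<open>0 < s\<close> show False
      by simp
  qed
  moreover have "0 < Sup I"
    using calculation x sup by (cases "Sup I = 0") auto
  ultimately show ?thesis
    using that sup by blast
qed

lemma mem_closed_segment_opposite:
  fixes x d :: "'a::real_vector"
  assumes "0 < s" "0 < t"
  shows "x \<in> closed_segment (x + s *\<^sub>R d) (x - t *\<^sub>R d)"
proof -
  let ?u = "s / (s + t)"
  have "(1 - ?u) * s - ?u * t = 0"
    using assms by (simp add: field_simps)
  moreover have "(1 - ?u) *\<^sub>R (x + s *\<^sub>R d) + ?u *\<^sub>R (x - t *\<^sub>R d) = x + ((1 - ?u) * s - ?u * t) *\<^sub>R d"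
    by (simp add: algebra_simps)
  ultimately have "x = (1 - ?u) *\<^sub>R (x + s *\<^sub>R d) + ?u *\<^sub>R (x - t *\<^sub>R d)"
    by simp
  then show ?thesis
    using assms unfolding in_segment by (intro exI[of _ "s / (s + t)"]) auto
qed

lemma dim_orthogonal_slice:
  fixes D V :: "'a::euclidean_space set"
  assumes "subspace D"
  shows "dim D \<le> dim {d \<in> D. \<forall>v\<in>V. v \<bullet> d = 0} + dim V"
proof -
  define W where "W = {d. \<forall>v\<in>span V. orthogonal v d}"
  have "v \<bullet> d = 0" if "\<forall>v\<in>V. v \<bullet> d = 0" "v \<in> span V" for v d
    using orthogonal_to_span[OF that(2), of d] that(1) by (simp add: orthogonal_def inner_commute)
  then have W_eq: "{d. \<forall>v\<in>V. v \<bullet> d = 0} = W"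
    unfolding W_def orthogonal_def by (auto intro: span_base)
  have "subspace W"
    unfolding W_def by (rule subspace_orthogonal_to_vectors)
  have "dim W + dim V = DIM('a)"
    using dim_subspace_orthogonal_to_vectors[of "span V" UNIV] by (simp add: W_def)
  moreover have "dim {x + y |x y. x \<in> D \<and> y \<in> W} + dim (D \<inter> W) = dim D + dim W"
    using assms \<open>subspace W\<close> by (rule dim_sums_Int)
  moreover have "dim {x + y |x y. x \<in> D \<and> y \<in> W} \<le> DIM('a)"
    by (rule dim_subset_UNIV)
  moreover have "D \<inter> W = {d \<in> D. \<forall>v\<in>V. v \<bullet> d = 0}"
    using W_eq by blast
  then have "dim (D \<inter> W) = dim {d \<in> D. \<forall>v\<in>V. v \<bullet> d = 0}"
    by simp
  ultimately show ?thesis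
    by linarith
qed

lemma subspace_direction_avoiding_pointed:
  fixes L C :: "'a::euclidean_space set"
  assumes L: "subspace L" "2 \<le> dim L" and "closed C"
    and pointed: "\<And>e. e \<in> C \<Longrightarrow> - e \<in> C \<Longrightarrow> e = 0"
  obtains e where "e \<in> L" "e \<notin> C" "- e \<notin> C"
proof (rule ccontr)
  assume "\<not> thesis"
  with that have C_or_neg: "e \<in> C \<or> - e \<in> C" if "e \<in> L" for e
    using \<open>e \<in> L\<close> by blast
  have cover: "L - {0} \<subseteq> C \<union> uminus ` C"
  proof
    fix e
    assume "e \<in> L - {0}"
    then consider "e \<in> C" | "- e \<in> C"
      using C_or_neg by blast
    then show "e \<in> C \<union> uminus ` C"
      by cases (auto intro: image_eqI[of e uminus "- e"])
  qed
  have disjoint: "C \<inter> uminus ` C \<inter> (L - {0}) = {}"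
    using pointed by auto
  obtain e where e: "e \<in> L - {0}"
    using L(2) dim_eq_0[of L] by fastforce
  obtain c where c: "c \<in> L - {0}" "c \<in> C"
  proof (cases "e \<in> C")
    case False
    then show ?thesis
      using that[of "- e"] C_or_neg[of e] e L(1) by (simp add: subspace_neg)
  qed (use that e in blast)
  then have "- c \<in> L - {0}" "- c \<in> uminus ` C"
    using L(1) by (auto simp: subspace_neg)
  with c have meets: "C \<inter> (L - {0}) \<noteq> {}" "uminus ` C \<inter> (L - {0}) \<noteq> {}"
    by blast+
  have "connected (L - {0})"
    using L by (intro connected_punctured_convex) (auto simp: subspace_imp_convex aff_dim_subspace)
  moreover have "closed (uminus ` C)"
    using \<open>closed C\<close> by (rule closed_negations)
  ultimately show False
    using \<open>closed C\<close> cover disjoint meets unfolding connected_closed by blast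
qed

locale face_condition =
  fixes K X :: "'a::euclidean_space set" and mt :: nat
  assumes closed_K: "closed K" and convex_K: "convex K" and line_free: "\<not> contains_line K"
    and face_sums_subset: "\<And>F R. F face_of K \<Longrightarrow> aff_dim F \<le> int mt \<Longrightarrow>
      R face_of rec_cone K \<Longrightarrow> aff_dim R \<le> int mt + 1 \<Longrightarrow> minkowski_sum F R \<subseteq> X"
begin

lemma face_closed: "G face_of K \<Longrightarrow> closed G"
  using face_of_imp_closed closed_K convex_K by blast

lemma face_rec_cone_pointed:
  assumes "G face_of K" "G \<noteq> {}" "e \<in> rec_cone G" "- e \<in> rec_cone G"
  shows "e = 0"
proof -
  have "\<not> contains_line G"
    using line_free face_of_imp_subset[OF assms(1)] by (auto simp: contains_line_def)
  then show ?thesis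
    using rec_cone_pointed assms(2-4) by blast
qed

lemma small_face_subset:
  assumes "F face_of K" "aff_dim F \<le> int mt"
  shows "F \<subseteq> X"
proof (cases "F = {}")
  case False
  then have "{0} face_of rec_cone K"
    using zero_face_of_rec_cone line_free face_of_imp_subset[OF assms(1)] by blast
  then have "minkowski_sum F {0} \<subseteq> X"
    using face_sums_subset assms by simp
  then show ?thesis
    by (simp add: minkowski_sum_def)
qed simp

lemma one_sided_direction_mem:
  assumes G: "G face_of K" "aff_dim G \<le> int mt + 1" and x: "x \<in> rel_interior G"
    and e: "e \<in> span ((+) (- x) ` G)" "e \<in> rec_cone G" "- e \<notin> rec_cone G"
  shows "x \<in> X"
proof -
  have "closed G" "convex G"
    using face_closed face_of_imp_convex G(1) by blast+
  have "- e \<in> span ((+) (- x) ` G)"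
    using e(1) by (rule span_neg)
  then obtain t where t: "0 < t" "x - t *\<^sub>R e \<in> G" "x - t *\<^sub>R e \<notin> rel_interior G"
    using ray_leaves_rel_interior[OF \<open>closed G\<close> \<open>convex G\<close> x _ e(3)] by auto
  then obtain F where F: "F face_of G" "x - t *\<^sub>R e \<in> F" "aff_dim F < aff_dim G"
    using rel_frontier_point_in_lower_face[OF \<open>closed G\<close> \<open>convex G\<close>] by blast
  have "G \<noteq> {}"
    using t(2) by blast
  have "F face_of K"
    using face_of_trans F(1) G(1) by blast
  moreover have "aff_dim F \<le> int mt"
    using F(3) G(2) by simp
  moreover have "rec_cone G face_of rec_cone K"
    using rec_cone_face_of_rec_cone closed_K convex_K G(1) \<open>G \<noteq> {}\<close> by blast
  moreover have "aff_dim (rec_cone G) \<le> int mt + 1"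
    using aff_dim_rec_cone_le[OF t(2)] G(2) by simp
  moreover have "x \<in> minkowski_sum F (rec_cone G)"
    using F(2) rec_cone_scaleR[OF e(2), of t] t(1) unfolding minkowski_sum_def
    by (intro CollectI exI[of _ "x - t *\<^sub>R e"] exI[of _ "t *\<^sub>R e"]) simp
  ultimately show ?thesis
    using face_sums_subset by blast
qed

end

locale face_condition_cut = face_condition K X mt for K X :: "'a::euclidean_space set" and mt +
  fixes V P :: "'a set"
  assumes dim_V: "dim V \<le> mt"
    and P_translate: "\<And>x d. x \<in> P \<Longrightarrow> \<forall>v\<in>V. v \<bullet> d = 0 \<Longrightarrow> x + d \<in> P"
begin

lemma rel_frontier_point_in_hull:
  assumes IH: "\<And>F. F face_of K \<Longrightarrow> aff_dim F < aff_dim G \<Longrightarrow> F \<inter> P \<subseteq> convex hull (X \<inter> P)"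
    and "G face_of K" "y \<in> G" "y \<notin> rel_interior G" "y \<in> P"
  shows "y \<in> convex hull (X \<inter> P)"
proof -
  obtain F where "F face_of G" "y \<in> F" "aff_dim F < aff_dim G"
    using rel_frontier_point_in_lower_face face_closed face_of_imp_convex assms(2-4) by metis
  then show ?thesis
    using IH face_of_trans \<open>G face_of K\<close> \<open>y \<in> P\<close> by blast
qed

lemma two_sided_direction_in_hull:
  assumes IH: "\<And>F. F face_of K \<Longrightarrow> aff_dim F < aff_dim G \<Longrightarrow> F \<inter> P \<subseteq> convex hull (X \<inter> P)"
    and G: "G face_of K" and x: "x \<in> rel_interior G" "x \<in> P"
    and e: "e \<in> span ((+) (- x) ` G)" "\<forall>v\<in>V. v \<bullet> e = 0" "e \<notin> rec_cone G" "- e \<notin> rec_cone G"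
  shows "x \<in> convex hull (X \<inter> P)"
proof -
  have "closed G" "convex G"
    using face_closed face_of_imp_convex G by blast+
  obtain s where s: "0 < s" "x + s *\<^sub>R e \<in> G" "x + s *\<^sub>R e \<notin> rel_interior G"
    using ray_leaves_rel_interior[OF \<open>closed G\<close> \<open>convex G\<close> x(1) e(1,3)] by blast
  obtain t where t: "0 < t" "x - t *\<^sub>R e \<in> G" "x - t *\<^sub>R e \<notin> rel_interior G"
    using ray_leaves_rel_interior[OF \<open>closed G\<close> \<open>convex G\<close> x(1) span_neg[OF e(1)] e(4)] by auto
  have "x + s *\<^sub>R e \<in> P" "x - t *\<^sub>R e \<in> P"
    using P_translate[OF x(2), of "s *\<^sub>R e"] P_translate[OF x(2), of "(- t) *\<^sub>R e"] e(2) by simp_all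
  then have "x + s *\<^sub>R e \<in> convex hull (X \<inter> P)" "x - t *\<^sub>R e \<in> convex hull (X \<inter> P)"
    using rel_frontier_point_in_hull[OF IH G] s t by auto
  then show ?thesis
    using mem_closed_segment_opposite[OF s(1) t(1)] closed_segment_subset_convex_hull by blast
qed

lemma rel_interior_point_in_hull:
  assumes IH: "\<And>F. F face_of K \<Longrightarrow> aff_dim F < aff_dim G \<Longrightarrow> F \<inter> P \<subseteq> convex hull (X \<inter> P)"
    and G: "G face_of K" "int mt < aff_dim G" and x: "x \<in> rel_interior G" "x \<in> P"
  shows "x \<in> convex hull (X \<inter> P)"
proof -
  define D where "D = span ((+) (- x) ` G)"
  define L where "L = {d \<in> D. \<forall>v\<in>V. v \<bullet> d = 0}"
  have "x \<in> G"
    using x(1) rel_interior_subset by blast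
  have "subspace L"
    unfolding L_def D_def by (auto simp: subspace_def span_zero span_add span_scale inner_add_right)
  have "aff_dim G = int (dim D)"
    using aff_dim_eq_dim[OF hull_inc[OF \<open>x \<in> G\<close>]] by (simp add: D_def)
  moreover have "dim D \<le> dim L + dim V"
    unfolding L_def D_def by (rule dim_orthogonal_slice) simp
  ultimately have dim_L: "aff_dim G \<le> int (dim L) + int mt"
    using dim_V by linarith
  have pointed: "e = 0" if "e \<in> rec_cone G" "- e \<in> rec_cone G" for e
    using face_rec_cone_pointed G(1) \<open>x \<in> G\<close> that by blast
  have two_sided: ?thesis if "e \<in> L" "e \<notin> rec_cone G" "- e \<notin> rec_cone G" for e
    using two_sided_direction_in_hull[OF IH G(1) x] that unfolding L_def D_def by blast
  show ?thesis
  proof (cases "aff_dim G \<le> int mt + 1")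
    case True
    obtain e where e: "e \<in> L" "e \<noteq> 0"
      using dim_L G(2) dim_eq_0[of L] by fastforce
    consider "e \<notin> rec_cone G" "- e \<notin> rec_cone G" | "e \<in> rec_cone G" "- e \<notin> rec_cone G"
      | "- e \<in> rec_cone G" "- (- e) \<notin> rec_cone G"
      using pointed e(2) by force
    then show ?thesis
    proof cases
      case 1
      then show ?thesis
        using two_sided e(1) by blast
    next
      case 2
      then have "x \<in> X"
        using one_sided_direction_mem[OF G(1) True x(1)] e(1) unfolding L_def D_def by blast
      then show ?thesis
        using x(2) by (simp add: hull_inc)
    next
      case 3
      then have "x \<in> X"
        using one_sided_direction_mem[OF G(1) True x(1)] e(1) span_neg unfolding L_def D_def by blast
      then show ?thesis
        using x(2) by (simp add: hull_inc)
    qed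
  next
    case False
    then have "2 \<le> dim L"
      using dim_L by linarith
    moreover have "closed (rec_cone G)"
      using face_closed[OF G(1)] by (rule closed_rec_cone)
    ultimately obtain e where "e \<in> L" "e \<notin> rec_cone G" "- e \<notin> rec_cone G"
      using subspace_direction_avoiding_pointed[OF \<open>subspace L\<close> _ _ pointed] by blast
    then show ?thesis
      by (rule two_sided)
  qed
qed

lemma face_Int_subset_hull:
  assumes "G face_of K"
  shows "G \<inter> P \<subseteq> convex hull (X \<inter> P)"
  using assms
proof (induction "nat (aff_dim G + 1)" arbitrary: G rule: less_induct)
  case less
  have IH: "F \<inter> P \<subseteq> convex hull (X \<inter> P)" if "F face_of K" "aff_dim F < aff_dim G" for F
    using less.hyps[of F] that aff_dim_geq[of F] by simp
  show ?case
  proof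
    fix x
    assume "x \<in> G \<inter> P"
    then consider "aff_dim G \<le> int mt" | "x \<notin> rel_interior G" | "int mt < aff_dim G" "x \<in> rel_interior G"
      by linarith
    then show "x \<in> convex hull (X \<inter> P)"
    proof cases
      case 1
      then show ?thesis
        using small_face_subset[OF less.prems] \<open>x \<in> G \<inter> P\<close> by (blast intro: hull_inc)
    next
      case 2
      then show ?thesis
        using rel_frontier_point_in_hull[OF IH less.prems] \<open>x \<in> G \<inter> P\<close> by blast
    next
      case 3
      then show ?thesis
        using rel_interior_point_in_hull[OF IH less.prems] \<open>x \<in> G \<inter> P\<close> by blast
    qed
  qed
qed

corollary Int_subset_hull: "K \<inter> P \<subseteq> convex hull (X \<inter> P)"
  using face_Int_subset_hull face_of_refl[OF convex_K] by blast

end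

lemma clconv_Int_eq_if_subset_hull:
  fixes X P :: "'a::real_normed_vector set"
  assumes "closed P" "convex P" "clconv X \<inter> P \<subseteq> convex hull (X \<inter> P)"
  shows "clconv X \<inter> P = clconv (X \<inter> P)"
proof
  show "clconv X \<inter> P \<subseteq> clconv (X \<inter> P)"
    using assms(3) closure_subset unfolding clconv_def by blast
  have "convex hull (X \<inter> P) \<subseteq> clconv X \<inter> P"
    using assms(2) closure_subset hull_subset[of X convex]
    by (intro hull_minimal) (auto simp: clconv_def convex_Int convex_closure)
  then show "clconv (X \<inter> P) \<subseteq> clconv X \<inter> P"
    using assms(1) unfolding clconv_def by (intro closure_minimal) (auto simp: closed_Int)
qed

lemma frob_eq_inner: "frob A X = A \<bullet> X"
proof -
  have "frob A X = (\<Sum>j\<in>UNIV. \<Sum>k\<in>UNIV. A$k$j * X$k$j)"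
    by (simp add: frob_def trace_def matrix_matrix_mult_def transpose_def)
  also have "\<dots> = (\<Sum>k\<in>UNIV. \<Sum>j\<in>UNIV. A$k$j * X$k$j)"
    by (rule sum.swap)
  finally show ?thesis
    by (simp add: inner_vec_def)
qed

lemma lmi_cut_eq_Int: "lmi_cut S m A bl bu = S \<inter> lmi_cut UNIV m A bl bu"
  by (auto simp: lmi_cut_def)

lemma lmi_cut_UNIV_eq_INT:
  "lmi_cut UNIV m A bl bu = (\<Inter>i<m. (\<lambda>X. A i \<bullet> X) -` (ereal -` {bl i..bu i}))"
  by (auto simp: lmi_cut_def frob_eq_inner)

lemma closed_lmi_cut_UNIV: "closed (lmi_cut UNIV m A bl bu)"
  unfolding lmi_cut_UNIV_eq_INT vimage_comp
  by (intro closed_INT ballI continuous_closed_vimage closed_atLeastAtMost continuous_intros)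

lemma convex_lmi_cut_UNIV: "convex (lmi_cut UNIV m A bl bu)"
proof -
  have "convex (ereal -` {l..u})" for l u :: ereal
    unfolding is_interval_convex_1[symmetric] is_interval_1
    by (auto; meson ereal_less_eq(3) order_trans)
  then show ?thesis
    unfolding lmi_cut_UNIV_eq_INT
    by (intro convex_INT ballI convex_linear_vimage) (auto simp: linear_iff inner_add_right)
qed

lemma lmi_cut_UNIV_translate:
  assumes "X \<in> lmi_cut UNIV m A bl bu" "\<forall>v\<in>A ` {..<m}. v \<bullet> D = 0"
  shows "X + D \<in> lmi_cut UNIV m A bl bu"
  using assms by (auto simp: lmi_cut_def frob_eq_inner inner_add_right)

lemma theorem3_prop_holds:
  fixes Q :: "(real^'p^'n) set"
  shows "theorem3_prop Q k mt m"
  unfolding theorem3_prop_def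
proof (intro allI impI)
  fix t :: nat and F :: "nat \<Rightarrow> real^'p^'n \<Rightarrow> real" and A :: "nat \<Rightarrow> real^'p^'n"
    and bl bu :: "nat \<Rightarrow> ereal"
  let ?X = "domain_set Q k t F" and ?P = "lmi_cut UNIV m A bl bu"
  assume line_free: "\<not> contains_line (clconv ?X)"
    and faces: "\<forall>Fc Fr. Fc face_of clconv ?X \<and> aff_dim Fc \<le> int mt \<and>
      Fr face_of rec_cone (clconv ?X) \<and> aff_dim Fr \<le> int mt + 1 \<longrightarrow> minkowski_sum Fc Fr \<subseteq> ?X"
    and "dim (span (A ` {..<m})) = mt"
  interpret face_condition_cut "clconv ?X" ?X mt "A ` {..<m}" ?P
  proof
    show "closed (clconv ?X)" "convex (clconv ?X)"
      by (simp_all add: clconv_def convex_closure)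
    show "minkowski_sum Fc Fr \<subseteq> ?X"
      if "Fc face_of clconv ?X" "aff_dim Fc \<le> int mt"
        "Fr face_of rec_cone (clconv ?X)" "aff_dim Fr \<le> int mt + 1" for Fc Fr
      using faces that by blast
    show "dim (A ` {..<m}) \<le> mt"
      using \<open>dim (span (A ` {..<m})) = mt\<close> by simp
    show "x + d \<in> ?P" if "x \<in> ?P" "\<forall>v\<in>A ` {..<m}. v \<bullet> d = 0" for x d
      using that by (rule lmi_cut_UNIV_translate)
  qed (rule line_free)
  have "clconv ?X \<inter> ?P = clconv (?X \<inter> ?P)"
    by (rule clconv_Int_eq_if_subset_hull[OF closed_lmi_cut_UNIV convex_lmi_cut_UNIV Int_subset_hull])
  then show "lmi_cut (clconv ?X) m A bl bu = clconv (lmi_cut ?X m A bl bu)"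
    by (simp only: lmi_cut_eq_Int[of "clconv ?X"] lmi_cut_eq_Int[of ?X])
qed

theorem theorem3:
  fixes k mt m :: nat
  assumes "0 < k" and "mt \<le> m"
  shows "(k \<le> CARD('n) \<and> CARD('n) \<le> CARD('p) \<longrightarrow>
            theorem3_prop (UNIV :: (real^'p^'n) set) k mt m)
       \<and> (k \<le> CARD('n) \<longrightarrow> theorem3_prop (sym_mats :: (real^'n^'n) set) k mt m)
       \<and> (k \<le> CARD('n) \<longrightarrow> theorem3_prop (psd_mats :: (real^'n^'n) set) k mt m)"
  by (intro conjI impI theorem3_prop_holds)

end
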